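(* For every nonnegative integer $k$ and all integers $i,j\geq 2k+3$, we have $R_k^{\mathcal{SP}}(i,j)=i+j-1$, where $\mathcal{SP}$ is the class of split graphs.
   Context: All graphs are finite and simple. For a graph $G$ and a nonnegative integer $k$, a $k$-sparse $j$-set is a set of $j$ vertices of $G$ inducing a subgraph of maximum degree at most $k$; a $k$-dense $i$-set is a set of $i$ vertices of $G$ that is $k$-sparse in the complement of $G$. For a graph class $\mathcal{G}$, $R_k^{\mathcal{G}}(i,j)$ is the smallest natural number $n$ such that every graph on $n$ vertices in $\mathcal{G}$ has either a $k$-dense $i$-set or a $k$-sparse $j$-set. A split graph is a graph whose vertex set can be partitioned into a clique and an independent set. *)

theory Defs
  imports Main
begin

text \<open>A finite simple graph: finite vertex set V with a symmetric irreflexive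
  adjacency relation E (only its restriction to V matters).\<close>
definition simple_graph :: "'a set \<Rightarrow> ('a \<Rightarrow> 'a \<Rightarrow> bool) \<Rightarrow> bool" where
  "simple_graph V E \<longleftrightarrow> finite V \<and> (\<forall>x\<in>V. \<forall>y\<in>V. E x y = E y x) \<and> (\<forall>x\<in>V. \<not> E x x)"

definition compl_graph :: "('a \<Rightarrow> 'a \<Rightarrow> bool) \<Rightarrow> 'a \<Rightarrow> 'a \<Rightarrow> bool" where
  "compl_graph E u v \<longleftrightarrow> u \<noteq> v \<and> \<not> E u v"

definition split_graph :: "'a set \<Rightarrow> ('a \<Rightarrow> 'a \<Rightarrow> bool) \<Rightarrow> bool" where
  "split_graph V E \<longleftrightarrow> simple_graph V E \<and>
     (\<exists>C I. C \<union> I = V \<and> C \<inter> I = {} \<and>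
            (\<forall>x\<in>C. \<forall>y\<in>C. x \<noteq> y \<longrightarrow> E x y) \<and>
            (\<forall>x\<in>I. \<forall>y\<in>I. \<not> E x y))"

definition k_sparse :: "'a set \<Rightarrow> ('a \<Rightarrow> 'a \<Rightarrow> bool) \<Rightarrow> nat \<Rightarrow> 'a set \<Rightarrow> bool" where
  "k_sparse V E k S \<longleftrightarrow> S \<subseteq> V \<and> (\<forall>v\<in>S. card {u\<in>S. E v u} \<le> k)"

definition k_dense :: "'a set \<Rightarrow> ('a \<Rightarrow> 'a \<Rightarrow> bool) \<Rightarrow> nat \<Rightarrow> 'a set \<Rightarrow> bool" where
  "k_dense V E k S \<longleftrightarrow> k_sparse V (compl_graph E) k S"

text \<open>R_k^G(i,j) for a graph class given as a predicate; graphs on n vertices are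
  represented with vertex set {..<n}.\<close>
definition ramsey_k :: "(nat set \<Rightarrow> (nat \<Rightarrow> nat \<Rightarrow> bool) \<Rightarrow> bool) \<Rightarrow> nat \<Rightarrow> nat \<Rightarrow> nat \<Rightarrow> nat" where
  "ramsey_k cls k i j = (LEAST n. \<forall>E. simple_graph {..<n} E \<and> cls {..<n} E \<longrightarrow>
      (\<exists>S. card S = i \<and> k_dense {..<n} E k S) \<or> (\<exists>S. card S = j \<and> k_sparse {..<n} E k S))"

end

theory Submission
  imports Defs
begin

text \<open>Upper bound: a split graph on \<open>i + j - 1\<close> vertices has a clique of size \<open>i\<close> or an
  independent set of size \<open>j\<close>, and these are \<open>k\<close>-dense resp. \<open>k\<close>-sparse for every \<open>k\<close>.
  Lower bound: take a clique \<open>K\<close> of size \<open>i - 1\<close> and an independent set \<open>I\<close> of size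
  \<open>j - 1\<close>, split each into a first block of \<open>k + 1\<close> vertices and the rest, and join
  clique and independent vertices exactly when they lie in blocks of the same index.
  An \<open>i\<close>-set must contain an independent vertex, which is non-adjacent to all but at most
  \<open>max (k + 1) (i - k - 2)\<close> of the others; since \<open>i \<ge> 2k + 3\<close> this exceeds \<open>k\<close>
  non-neighbours. Dually, a \<open>j\<close>-set contains a clique vertex with more than \<open>k\<close> neighbours.\<close>

lemma split_graph_dense_or_sparse_set:
  assumes "split_graph V E" and "i + j - 1 \<le> card V"
  shows "(\<exists>S. card S = i \<and> k_dense V E k S) \<or> (\<exists>S. card S = j \<and> k_sparse V E k S)"
proof -
  obtain C I where CI: "C \<union> I = V" "C \<inter> I = {}"
    and clique: "\<forall>x\<in>C. \<forall>y\<in>C. x \<noteq> y \<longrightarrow> E x y" and indep: "\<forall>x\<in>I. \<forall>y\<in>I. \<not> E x y"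
    using assms(1) unfolding split_graph_def by blast
  have "finite V" using assms(1) by (simp add: split_graph_def simple_graph_def)
  then have "card C + card I = card V"
    using CI by (metis card_Un_disjoint finite_Un)
  then consider "i \<le> card C" | "j \<le> card I" using assms(2) by linarith
  then show ?thesis
  proof cases
    case 1
    then obtain S where S: "S \<subseteq> C" "card S = i" by (meson obtain_subset_with_card_n)
    have "card {u\<in>S. compl_graph E v u} = 0" if "v \<in> S" for v
      using clique S that unfolding compl_graph_def by (auto simp: card_eq_0_iff)
    with S CI(1) have "k_dense V E k S" unfolding k_dense_def k_sparse_def by auto
    with S show ?thesis by blast
  next
    case 2
    then obtain S where S: "S \<subseteq> I" "card S = j" by (meson obtain_subset_with_card_n)
    have "card {u\<in>S. E v u} = 0" if "v \<in> S" for v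
      using indep S that by (auto simp: card_eq_0_iff)
    with S CI(1) have "k_sparse V E k S" unfolding k_sparse_def by auto
    with S show ?thesis by blast
  qed
qed

lemma card_le_degree_plus_non_neighbours:
  assumes "finite S" "v \<in> S" "finite N" "\<forall>u\<in>S - {v} - N. F v u"
  shows "card S \<le> Suc (card {u\<in>S. F v u} + card N)"
proof -
  have "S \<subseteq> insert v ({u\<in>S. F v u} \<union> N)" using assms(4) by blast
  then have "card S \<le> card (insert v ({u\<in>S. F v u} \<union> N))"
    using assms(1,3) by (intro card_mono) auto
  also have "\<dots> \<le> Suc (card ({u\<in>S. F v u} \<union> N))"
    by (rule card_insert_le_m1) (simp_all add: assms)
  also have "\<dots> \<le> Suc (card {u\<in>S. F v u} + card N)"
    using card_Un_le by simp
  finally show ?thesis .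
qed

text \<open>The clique is \<open>{..<a}\<close>, the independent set \<open>{a..}\<close>; the first blocks are \<open>{..<p}\<close>
  and \<open>{a..<a + p}\<close>.\<close>
definition first_block :: "nat \<Rightarrow> nat \<Rightarrow> nat \<Rightarrow> bool" where
  "first_block a p x \<longleftrightarrow> x < p \<or> (a \<le> x \<and> x < a + p)"

definition two_block_split_graph :: "nat \<Rightarrow> nat \<Rightarrow> nat \<Rightarrow> nat \<Rightarrow> bool" where
  "two_block_split_graph a p x y \<longleftrightarrow> x \<noteq> y \<and>
     ((x < a \<and> y < a) \<or> ((x < a) \<noteq> (y < a) \<and> first_block a p x = first_block a p y))"

lemma split_graph_two_block_split_graph:
  assumes "finite V"
  shows "split_graph V (two_block_split_graph a p)"
proof -
  have "simple_graph V (two_block_split_graph a p)"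
    using assms by (auto simp: simple_graph_def two_block_split_graph_def)
  moreover have "\<exists>C I. C \<union> I = V \<and> C \<inter> I = {} \<and>
      (\<forall>x\<in>C. \<forall>y\<in>C. x \<noteq> y \<longrightarrow> two_block_split_graph a p x y) \<and>
      (\<forall>x\<in>I. \<forall>y\<in>I. \<not> two_block_split_graph a p x y)"
    by (rule exI[of _ "V \<inter> {..<a}"], rule exI[of _ "V - {..<a}"])
      (auto simp: two_block_split_graph_def)
  ultimately show ?thesis by (simp add: split_graph_def)
qed

lemma two_block_split_graph_no_dense_set:
  assumes "p \<le> a" "a < card S" "k + p + 1 < card S" "k + (a - p) + 1 < card S"
  shows "\<not> k_dense V (two_block_split_graph a p) k S"
proof
  let ?G = "two_block_split_graph a p"
  assume dense: "k_dense V ?G k S"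
  have "finite S" using assms(2) card.infinite by fastforce
  obtain v where v: "v \<in> S" "a \<le> v"
  proof (rule ccontr)
    assume "\<not> thesis"
    then have "S \<subseteq> {..<a}" using that by force
    then show False using assms(2) card_mono[of "{..<a}" S] by simp
  qed
  define N where "N = {u. u < a \<and> first_block a p u = first_block a p v}"
  have non_neighbours: "\<forall>u\<in>S - {v} - N. compl_graph ?G v u"
    using v by (auto simp: N_def compl_graph_def two_block_split_graph_def)
  have "N = (if first_block a p v then {..<p} else {p..<a})"
    using v assms(1) by (auto simp: N_def first_block_def)
  then have card_N: "card N \<le> max p (a - p)" by simp
  have "card {u\<in>S. compl_graph ?G v u} \<le> k"
    using dense v by (simp add: k_dense_def k_sparse_def)
  moreover have "card S \<le> Suc (card {u\<in>S. compl_graph ?G v u} + card N)"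
    using \<open>finite S\<close> v(1) non_neighbours
    by (intro card_le_degree_plus_non_neighbours) (simp_all add: N_def)
  ultimately show False using card_N assms(3,4) by linarith
qed

lemma two_block_split_graph_no_sparse_set:
  assumes "V \<subseteq> {..<a + b}" "p \<le> b"
    and "b < card S" "k + p + 1 < card S" "k + (b - p) + 1 < card S"
  shows "\<not> k_sparse V (two_block_split_graph a p) k S"
proof
  let ?G = "two_block_split_graph a p"
  assume sparse: "k_sparse V ?G k S"
  then have "S \<subseteq> {..<a + b}" using assms(1) by (auto simp: k_sparse_def)
  have "finite S" using assms(3) card.infinite by fastforce
  obtain v where v: "v \<in> S" "v < a"
  proof (rule ccontr)
    assume "\<not> thesis"
    then have "S \<subseteq> {a..<a + b}" using that \<open>S \<subseteq> {..<a + b}\<close> by force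
    then show False using assms(3) card_mono[of "{a..<a + b}" S] by simp
  qed
  define N where "N = {u. a \<le> u \<and> u < a + b \<and> first_block a p u \<noteq> first_block a p v}"
  have neighbours: "\<forall>u\<in>S - {v} - N. ?G v u"
    using v \<open>S \<subseteq> {..<a + b}\<close> by (auto simp: N_def two_block_split_graph_def)
  have "N = (if first_block a p v then {a + p..<a + b} else {a..<a + p})"
    using v assms(2) by (auto simp: N_def first_block_def)
  then have card_N: "card N \<le> max p (b - p)" by simp
  have "card {u\<in>S. ?G v u} \<le> k"
    using sparse v by (simp add: k_sparse_def)
  moreover have "card S \<le> Suc (card {u\<in>S. ?G v u} + card N)"
    using \<open>finite S\<close> v(1) neighbours
    by (intro card_le_degree_plus_non_neighbours) (simp_all add: N_def)
  ultimately show False using card_N assms(4,5) by linarith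
qed

theorem corollary6p1:
  fixes k i j :: nat
  assumes "i \<ge> 2 * k + 3" and "j \<ge> 2 * k + 3"
  shows "ramsey_k split_graph k i j = i + j - 1"
  unfolding ramsey_k_def
proof (rule Least_equality)
  show "\<forall>E. simple_graph {..<i + j - 1} E \<and> split_graph {..<i + j - 1} E \<longrightarrow>
      (\<exists>S. card S = i \<and> k_dense {..<i + j - 1} E k S) \<or>
      (\<exists>S. card S = j \<and> k_sparse {..<i + j - 1} E k S)"
    by (intro allI impI split_graph_dense_or_sparse_set) simp_all
next
  fix n :: nat
  assume ramsey: "\<forall>E. simple_graph {..<n} E \<and> split_graph {..<n} E \<longrightarrow>
      (\<exists>S. card S = i \<and> k_dense {..<n} E k S) \<or> (\<exists>S. card S = j \<and> k_sparse {..<n} E k S)"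
  show "i + j - 1 \<le> n"
  proof (rule ccontr)
    assume "\<not> i + j - 1 \<le> n"
    let ?G = "two_block_split_graph (i - 1) (k + 1)"
    have split: "split_graph {..<n} ?G" by (simp add: split_graph_two_block_split_graph)
    then have simple: "simple_graph {..<n} ?G" by (simp add: split_graph_def)
    have no_dense: "\<not> k_dense {..<n} ?G k S" if "card S = i" for S
      using assms that by (intro two_block_split_graph_no_dense_set) auto
    have no_sparse: "\<not> k_sparse {..<n} ?G k S" if "card S = j" for S
      using assms that \<open>\<not> i + j - 1 \<le> n\<close>
      by (intro two_block_split_graph_no_sparse_set[where b = "j - 1"]) auto
    show False using ramsey split simple no_dense no_sparse by blast
  qed
qed

end
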